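(* Let $f\in\mathrm{Homeo}_+(\mathbb{R})$ satisfy $f(x+1)=f(x)+2$ for all $x\in\mathbb{R}$ and $f(0)=0$. Then there is a unique group homomorphism $\theta_f:GA(\mathbb{Q}_2)\to\mathrm{Homeo}_+(\mathbb{R})$ with $\theta_f(T_1)=T_1$ and $\theta_f(D)=f$, and this homomorphism is injective.
   Context: $\mathbb{Q}_2=\{p/2^q:p,q\in\mathbb{Z}\}$ denotes the dyadic rationals. $GA(\mathbb{Q}_2)$ is the group under composition of affine maps $x\mapsto 2^nx+r$ of $\mathbb{R}$ with $n\in\mathbb{Z}$, $r\in\mathbb{Q}_2$; $T_1(x)=x+1$, $D(x)=2x$. $\mathrm{Homeo}_+(\mathbb{R})$ is the group of increasing self-homeomorphisms of $\mathbb{R}$. *)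

theory Defs
  imports "HOL-Analysis.Analysis" "HOL-Algebra.Group"
begin

definition dyadic :: "real set" where
  "dyadic = {x. \<exists>p q :: int. x = real_of_int p / 2 powi q}"

definition GA_maps :: "(real \<Rightarrow> real) set" where
  "GA_maps = {g. \<exists>(n::int) r. r \<in> dyadic \<and> g = (\<lambda>x. 2 powi n * x + r)}"

definition GA_Q2 :: "(real \<Rightarrow> real) monoid" where
  "GA_Q2 = \<lparr>carrier = GA_maps, mult = (\<circ>), one = id\<rparr>"

definition Homeo_plus_maps :: "(real \<Rightarrow> real) set" where
  "Homeo_plus_maps = {h. (\<exists>g. homeomorphism UNIV UNIV h g) \<and> mono h}"

definition Homeo_plus :: "(real \<Rightarrow> real) monoid" where
  "Homeo_plus = \<lparr>carrier = Homeo_plus_maps, mult = (\<circ>), one = id\<rparr>"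

definition T1 :: "real \<Rightarrow> real" where "T1 = (\<lambda>x. x + 1)"
definition D :: "real \<Rightarrow> real" where "D = (\<lambda>x. 2 * x)"

end

theory Submission
  imports Defs "HOL-Algebra.Coset"
begin

text \<open>
  Every element \<open>x \<mapsto> 2^n x + c/2^q\<close> of GA(Q_2) is the word \<open>D^-q T1^c D^(q+n)\<close>, so a
  homomorphism is determined by the images of \<open>T1\<close> and \<open>D\<close>. For existence, the translation by
  \<open>c/2^q\<close> must go to \<open>f^-q T1^c f^q\<close>; this does not depend on the representation of \<open>c/2^q\<close>
  because \<open>f T1 = T1^2 f\<close>, which is the hypothesis \<open>f (x + 1) = f x + 2\<close>. The resulting copy of
  the dyadic translations is normalised by \<open>f\<close> through doubling, so sending \<open>x \<mapsto> 2^n x + r\<close> to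
  (image of translation by \<open>r\<close>) \<open>\<circ> f^n\<close> is a homomorphism. Its kernel is trivial: if that
  composite is the identity, then \<open>f^n\<close> lies in the translation copy and so commutes with \<open>T1\<close>,
  whereas \<open>f^n\<close> conjugates \<open>T1\<close> to the image of translation by \<open>2^n\<close>; hence \<open>n = 0\<close>, and then
  \<open>r = 0\<close> since translations by nonzero integers are not the identity.
\<close>

lemma power_int_inject_exp [simp]:
  fixes a :: "'a::linordered_field"
  assumes "1 < a"
  shows "a powi m = a powi n \<longleftrightarrow> m = n"
  using power_int_strict_increasing[OF _ assms] by (metis linorder_neqE less_irrefl)

lemma mono_inverse_of_mono_homeomorphism:
  fixes h :: "real \<Rightarrow> real"
  assumes "homeomorphism UNIV UNIV h g" "mono h"
  shows "mono g"
proof (rule monoI)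
  fix x y :: real assume "x \<le> y"
  have "h (g x) = x" "h (g y) = y" using assms(1) by (auto simp: homeomorphism_def)
  with \<open>x \<le> y\<close> \<open>mono h\<close> show "g x \<le> g y"
    by (metis linorder_le_cases monoD order_antisym)
qed

lemma Homeo_plus_simps [simp]:
  "carrier Homeo_plus = Homeo_plus_maps" "x \<otimes>\<^bsub>Homeo_plus\<^esub> y = x \<circ> y" "\<one>\<^bsub>Homeo_plus\<^esub> = id"
  by (simp_all add: Homeo_plus_def)

lemma group_Homeo_plus: "group Homeo_plus"
proof (rule groupI)
  fix h assume "h \<in> carrier Homeo_plus"
  then obtain g where g: "homeomorphism UNIV UNIV h g" "mono h"
    by (auto simp: Homeo_plus_maps_def)
  then have "g \<in> Homeo_plus_maps"
    by (auto simp: Homeo_plus_maps_def intro: homeomorphism_symD mono_inverse_of_mono_homeomorphism)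
  moreover have "g \<circ> h = id" using g(1) by (auto simp: homeomorphism_def)
  ultimately show "\<exists>g\<in>carrier Homeo_plus. g \<otimes>\<^bsub>Homeo_plus\<^esub> h = \<one>\<^bsub>Homeo_plus\<^esub>" by auto
next
  fix g h assume "g \<in> carrier Homeo_plus" "h \<in> carrier Homeo_plus"
  then show "g \<otimes>\<^bsub>Homeo_plus\<^esub> h \<in> carrier Homeo_plus"
    by (auto simp: Homeo_plus_maps_def mono_def intro: homeomorphism_compose)
qed (auto simp: Homeo_plus_maps_def mono_def o_assoc homeomorphism_def intro!: exI[of _ id])

interpretation Homeo_plus: group Homeo_plus
  by (rule group_Homeo_plus)

lemma (in group) int_pow_eq_of_mult_hom:
  assumes closed: "\<And>k. \<phi> k \<in> carrier G" and mult: "\<And>a b. \<phi> (a + b) = \<phi> a \<otimes> \<phi> b"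
  shows "\<phi> 1 [^] (k::int) = \<phi> k"
proof (induction k rule: int_induct[where k = 0])
  case base
  have "\<phi> 0 = \<phi> 0 \<otimes> \<phi> 0" using mult[of 0 0] by simp
  then show ?case using closed by simp
next
  case (step1 i)
  then show ?case using closed by (simp add: int_pow_mult mult)
next
  case (step2 i)
  have "\<phi> i = \<phi> (i - 1) \<otimes> \<phi> 1" using mult[of "i - 1" 1] by simp
  then have "\<phi> (i - 1) = \<phi> i \<otimes> inv \<phi> 1"
    using closed by (simp add: m_assoc)
  then show ?case using step2 closed by (simp add: int_pow_diff)
qed

lemma dyadic_iff: "r \<in> dyadic \<longleftrightarrow> (\<exists>q c. r * 2 powi q = of_int c)"
  by (auto simp: dyadic_def field_simps)

lemma dyadic_rescale:
  "(r::real) * 2 powi q = of_int c \<Longrightarrow> r * 2 powi (q + int k) = of_int (2 ^ k * c)"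
  by (simp add: power_int_add algebra_simps)

lemma dyadic_eventually_integral:
  assumes "r \<in> dyadic"
  obtains q0 where "\<And>q. q0 \<le> q \<Longrightarrow> \<exists>c. r * 2 powi q = of_int c"
proof -
  obtain q0 c where c: "r * 2 powi q0 = of_int c" using assms by (auto simp: dyadic_iff)
  have "\<exists>c. r * 2 powi q = of_int c" if "q0 \<le> q" for q
    using dyadic_rescale[OF c, of "nat (q - q0)"] that by (auto intro: exI[of _ "2 ^ nat (q - q0) * c"])
  then show thesis by (rule that)
qed

lemma dyadic_common_exponent:
  assumes "r \<in> dyadic" "s \<in> dyadic"
  obtains q a b where "r * 2 powi q = of_int a" "s * 2 powi q = of_int b"
proof -
  obtain q1 where "\<And>q. q1 \<le> q \<Longrightarrow> \<exists>a. r * 2 powi q = of_int a"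
    using dyadic_eventually_integral[OF assms(1)] by blast
  moreover obtain q2 where "\<And>q. q2 \<le> q \<Longrightarrow> \<exists>b. s * 2 powi q = of_int b"
    using dyadic_eventually_integral[OF assms(2)] by blast
  ultimately show thesis using that[of "max q1 q2"] by fastforce
qed

lemma dyadic_of_int [simp]: "of_int c \<in> dyadic"
  by (auto simp: dyadic_iff intro: exI[of _ 0])

lemma dyadic_0 [simp]: "0 \<in> dyadic" and dyadic_1 [simp]: "1 \<in> dyadic"
  using dyadic_of_int[of 0] dyadic_of_int[of 1] by simp_all

lemma dyadic_add: "r \<in> dyadic \<Longrightarrow> s \<in> dyadic \<Longrightarrow> r + s \<in> dyadic"
proof -
  assume "r \<in> dyadic" "s \<in> dyadic"
  then obtain q a b where "r * 2 powi q = of_int a" "s * 2 powi q = of_int b"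
    by (rule dyadic_common_exponent)
  then have "(r + s) * 2 powi q = of_int (a + b)" by (simp add: distrib_right)
  then show ?thesis unfolding dyadic_iff by blast
qed

lemma dyadic_uminus: "r \<in> dyadic \<Longrightarrow> - r \<in> dyadic"
  by (auto simp: dyadic_iff) (metis of_int_minus)

lemma dyadic_powi_mult: "r \<in> dyadic \<Longrightarrow> 2 powi n * r \<in> dyadic"
proof -
  assume "r \<in> dyadic"
  then obtain q c where "r * 2 powi q = of_int c" by (auto simp: dyadic_iff)
  then have "(2 powi n * r) * 2 powi (q - n) = of_int c" by (simp add: power_int_diff field_simps)
  then show ?thesis by (auto simp: dyadic_iff)
qed

definition shift :: "int \<Rightarrow> real \<Rightarrow> real" where
  "shift c = (\<lambda>x. x + of_int c)"

lemma shift_add: "shift a \<circ> shift b = shift (a + b)"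
  by (auto simp: shift_def)

lemma shift_0 [simp]: "shift 0 = id" and T1_eq_shift: "T1 = shift 1"
  by (auto simp: shift_def T1_def)

lemma shift_eq_id_iff: "shift c = id \<longleftrightarrow> c = 0"
  by (auto simp: shift_def fun_eq_iff)

lemma shift_in_Homeo_plus: "shift c \<in> Homeo_plus_maps"
proof -
  have "homeomorphism UNIV UNIV (shift c) (shift (- c))"
    by (rule homeomorphismI) (auto simp: shift_def intro!: continuous_intros)
  moreover have "mono (shift c)" by (auto simp: shift_def mono_def)
  ultimately show ?thesis unfolding Homeo_plus_maps_def by auto
qed

lemma GA_Q2_simps [simp]:
  "carrier GA_Q2 = GA_maps" "x \<otimes>\<^bsub>GA_Q2\<^esub> y = x \<circ> y" "\<one>\<^bsub>GA_Q2\<^esub> = id"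
  by (simp_all add: GA_Q2_def)

lemma affine_in_GA_maps: "r \<in> dyadic \<Longrightarrow> (\<lambda>x. 2 powi n * x + r) \<in> GA_maps"
  by (auto simp: GA_maps_def)

lemma affine_comp:
  "(\<lambda>x. 2 powi a * x + r) \<circ> (\<lambda>x. 2 powi b * x + s) = (\<lambda>x::real. 2 powi (a + b) * x + (2 powi a * s + r))"
  by (auto simp: power_int_add algebra_simps)

lemma group_GA_Q2: "group GA_Q2"
proof (rule groupI)
  fix g h assume "g \<in> carrier GA_Q2" "h \<in> carrier GA_Q2"
  then obtain a b r s where "r \<in> dyadic" "s \<in> dyadic"
    and "g = (\<lambda>x. 2 powi a * x + r)" "h = (\<lambda>x. 2 powi b * x + s)"
    by (auto simp: GA_maps_def)
  then show "g \<otimes>\<^bsub>GA_Q2\<^esub> h \<in> carrier GA_Q2"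
    by (simp add: affine_comp affine_in_GA_maps dyadic_add dyadic_powi_mult)
next
  fix g assume "g \<in> carrier GA_Q2"
  then obtain n r where r: "r \<in> dyadic" and g: "g = (\<lambda>x. 2 powi n * x + r)"
    by (auto simp: GA_maps_def)
  have "(\<lambda>x. 2 powi (- n) * x + - (2 powi (- n) * r)) \<circ> g = id"
    unfolding g affine_comp by (auto simp: power_int_minus)
  moreover have "(\<lambda>x. 2 powi (- n) * x + - (2 powi (- n) * r)) \<in> GA_maps"
    using r by (intro affine_in_GA_maps dyadic_uminus dyadic_powi_mult)
  ultimately show "\<exists>h\<in>carrier GA_Q2. h \<otimes>\<^bsub>GA_Q2\<^esub> g = \<one>\<^bsub>GA_Q2\<^esub>" by auto
next
  show "\<one>\<^bsub>GA_Q2\<^esub> \<in> carrier GA_Q2"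
    using affine_in_GA_maps[OF dyadic_0, of 0] by (simp add: id_def)
qed (auto simp: o_assoc)

interpretation GA_Q2: group GA_Q2
  by (rule group_GA_Q2)

lemma GA_Q2_D_int_pow: "D [^]\<^bsub>GA_Q2\<^esub> k = (\<lambda>x. 2 powi k * x)"
proof -
  have "(\<lambda>x. 2 powi k * x) \<in> GA_maps" for k
    using affine_in_GA_maps[OF dyadic_0, of k] by simp
  then have "(\<lambda>x::real. 2 powi 1 * x) [^]\<^bsub>GA_Q2\<^esub> k = (\<lambda>x. 2 powi k * x)"
    by (intro GA_Q2.int_pow_eq_of_mult_hom) (auto simp: power_int_add)
  then show ?thesis by (simp add: D_def)
qed

lemma GA_Q2_T1_int_pow: "T1 [^]\<^bsub>GA_Q2\<^esub> c = shift c"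
proof -
  have "shift c \<in> GA_maps" for c
    using affine_in_GA_maps[OF dyadic_of_int, of 0 c] by (simp add: shift_def)
  then have "shift 1 [^]\<^bsub>GA_Q2\<^esub> c = shift c"
    by (intro GA_Q2.int_pow_eq_of_mult_hom) (auto simp: shift_add)
  then show ?thesis by (simp add: T1_eq_shift)
qed

lemma GA_Q2_affine_eq_D_T1_word:
  assumes "r * 2 powi q = of_int c"
  shows "(\<lambda>x. 2 powi n * x + r) =
    D [^]\<^bsub>GA_Q2\<^esub> (- q) \<otimes>\<^bsub>GA_Q2\<^esub> T1 [^]\<^bsub>GA_Q2\<^esub> c \<otimes>\<^bsub>GA_Q2\<^esub> D [^]\<^bsub>GA_Q2\<^esub> (q + n)"
proof -
  have "2 powi (- q) * (2 powi (q + n) * x + of_int c) = 2 powi n * x + r" for x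
    using assms by (simp add: power_int_add power_int_minus field_simps)
  then show ?thesis by (auto simp: GA_Q2_D_int_pow GA_Q2_T1_int_pow shift_def)
qed

lemma hom_GA_Q2_eqI:
  assumes "\<theta> \<in> hom GA_Q2 G" "\<theta>' \<in> hom GA_Q2 G" "group G"
    and "\<theta> T1 = \<theta>' T1" "\<theta> D = \<theta>' D" "g \<in> carrier GA_Q2"
  shows "\<theta> g = \<theta>' g"
proof -
  obtain n r q c where "g = (\<lambda>x. 2 powi n * x + r)" "r * 2 powi q = of_int c"
    using assms(6) by (auto simp: GA_maps_def dyadic_iff)
  moreover have "T1 \<in> carrier GA_Q2" "D \<in> carrier GA_Q2"
    using affine_in_GA_maps[OF dyadic_1, of 0] affine_in_GA_maps[OF dyadic_0, of 1]
    by (simp_all add: T1_def D_def)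
  ultimately show ?thesis using assms
    by (simp add: GA_Q2_affine_eq_D_T1_word hom_mult hom_int_pow del: GA_Q2_simps)
qed

locale doubling_homeo =
  fixes f :: "real \<Rightarrow> real"
  assumes f_in_Homeo_plus: "f \<in> Homeo_plus_maps"
    and f_add_1: "\<And>x. f (x + 1) = f x + 2"
begin

definition fpow :: "int \<Rightarrow> real \<Rightarrow> real" where
  "fpow n = f [^]\<^bsub>Homeo_plus\<^esub> n"

lemma fpow_in_Homeo_plus: "fpow n \<in> Homeo_plus_maps"
  using f_in_Homeo_plus by (simp add: fpow_def flip: Homeo_plus_simps(1))

lemma fpow_add: "fpow (m + n) = fpow m \<circ> fpow n"
  using f_in_Homeo_plus by (simp add: fpow_def Homeo_plus.int_pow_mult)

lemma fpow_0 [simp]: "fpow 0 = id" and fpow_1: "fpow 1 = f"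
  using f_in_Homeo_plus by (simp_all add: fpow_def)

lemma fpow_cancel: "fpow (- n) \<circ> fpow n = id" "fpow n \<circ> fpow (- n) = id"
  by (simp_all flip: fpow_add)

lemma f_comp_shift: "f \<circ> shift c = shift (2 * c) \<circ> f"
proof -
  have "f (x + of_int c) = f x + 2 * of_int c" for x
  proof (induction c rule: int_induct[where k = 0])
    case (step1 i)
    then show ?case using f_add_1[of "x + of_int i"] by (simp add: algebra_simps)
  next
    case (step2 i)
    then show ?case using f_add_1[of "x + of_int i - 1"] by (simp add: algebra_simps)
  qed simp
  then show ?thesis by (auto simp: shift_def)
qed

text \<open>\<open>conj_shift q c\<close> is the intended image of the translation by \<open>c / 2^q\<close>.\<close>

definition conj_shift :: "int \<Rightarrow> int \<Rightarrow> real \<Rightarrow> real" where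
  "conj_shift q c = fpow (- q) \<circ> shift c \<circ> fpow q"

lemma conj_shift_double: "conj_shift (q + 1) (2 * c) = conj_shift q c"
proof -
  have "fpow (- (q + 1)) = fpow (- q) \<circ> fpow (- 1)" "fpow (q + 1) = f \<circ> fpow q"
    using fpow_add[of "- q" "- 1"] fpow_add[of 1 q] by (simp_all add: fpow_1 add.commute)
  then have "conj_shift (q + 1) (2 * c) = fpow (- q) \<circ> fpow (- 1) \<circ> (shift (2 * c) \<circ> f) \<circ> fpow q"
    by (simp add: conj_shift_def o_assoc)
  also have "\<dots> = fpow (- q) \<circ> (fpow (- 1) \<circ> fpow 1) \<circ> shift c \<circ> fpow q"
    by (simp add: f_comp_shift fpow_1 comp_assoc)
  also have "\<dots> = conj_shift q c"
    by (simp add: conj_shift_def fpow_cancel)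
  finally show ?thesis .
qed

lemma conj_shift_rescale: "conj_shift (q + int k) (2 ^ k * c) = conj_shift q c"
proof (induction k)
  case (Suc k)
  have "conj_shift (q + int (Suc k)) (2 ^ Suc k * c) = conj_shift (q + int k + 1) (2 * (2 ^ k * c))"
    by (simp add: mult.assoc add_ac)
  then show ?case using conj_shift_double Suc by simp
qed simp

lemma conj_shift_eq:
  fixes r :: real
  assumes "r * 2 powi q = of_int c" "r * 2 powi q' = of_int c'"
  shows "conj_shift q c = conj_shift q' c'"
proof -
  have "conj_shift q c = conj_shift q' c'" if "q \<le> q'"
    "r * 2 powi q = of_int c" "r * 2 powi q' = of_int c'" for q q' c c'
  proof -
    obtain k where q': "q' = q + int k" using \<open>q \<le> q'\<close> zle_iff_zadd by blast
    have "of_int c' = (of_int (2 ^ k * c) :: real)"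
      using dyadic_rescale[OF that(2), of k] that(3) q' by simp
    then show ?thesis unfolding q' of_int_eq_iff by (simp add: conj_shift_rescale)
  qed
  then show ?thesis using assms by (metis linorder_le_cases)
qed

lemma conj_shift_add: "conj_shift q a \<circ> conj_shift q b = conj_shift q (a + b)"
  by (simp add: conj_shift_def comp_assoc flip: shift_add)
     (simp add: fpow_cancel flip: comp_assoc)

lemma conj_shift_eq_id_iff: "conj_shift q c = id \<longleftrightarrow> c = 0"
proof
  assume "conj_shift q c = id"
  then have "fpow q \<circ> conj_shift q c \<circ> fpow (- q) = id"
    by (simp add: fpow_cancel)
  then show "c = 0"
    by (simp add: conj_shift_def comp_assoc fpow_cancel shift_eq_id_iff)
       (simp add: fpow_cancel shift_eq_id_iff flip: comp_assoc)
qed (simp add: conj_shift_def fpow_cancel)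

lemma conj_shift_in_Homeo_plus: "conj_shift q c \<in> Homeo_plus_maps"
  using Homeo_plus.m_closed fpow_in_Homeo_plus shift_in_Homeo_plus
  by (simp add: conj_shift_def)

lemma fpow_comp_conj_shift: "fpow n \<circ> conj_shift q c = conj_shift (q - n) c \<circ> fpow n"
  using fpow_add[of n "- q"] fpow_add[of "q - n" n]
  by (simp add: conj_shift_def o_assoc)

definition dyadic_shift :: "real \<Rightarrow> real \<Rightarrow> real" where
  "dyadic_shift r = (SOME h. \<exists>q c. r * 2 powi q = of_int c \<and> h = conj_shift q c)"

lemma dyadic_shift_eq: "r * 2 powi q = of_int c \<Longrightarrow> dyadic_shift r = conj_shift q c"
  unfolding dyadic_shift_def by (rule someI2) (auto intro: conj_shift_eq)

lemma dyadic_shift_of_int [simp]: "dyadic_shift (of_int c) = shift c"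
  using dyadic_shift_eq[of "of_int c" 0 c] by (simp add: conj_shift_def)

lemma dyadic_shift_0 [simp]: "dyadic_shift 0 = id" and dyadic_shift_1: "dyadic_shift 1 = T1"
  using dyadic_shift_of_int[of 0] dyadic_shift_of_int[of 1] by (simp_all add: T1_eq_shift)

lemma dyadic_shift_in_Homeo_plus: "r \<in> dyadic \<Longrightarrow> dyadic_shift r \<in> Homeo_plus_maps"
  by (auto simp: dyadic_iff dyadic_shift_eq conj_shift_in_Homeo_plus)

lemma dyadic_shift_add:
  assumes "r \<in> dyadic" "s \<in> dyadic"
  shows "dyadic_shift (r + s) = dyadic_shift r \<circ> dyadic_shift s"
proof -
  obtain q a b where a: "r * 2 powi q = of_int a" and b: "s * 2 powi q = of_int b"
    using assms by (rule dyadic_common_exponent)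
  then have "(r + s) * 2 powi q = of_int (a + b)" by (simp add: distrib_right)
  then show ?thesis by (simp add: dyadic_shift_eq[OF a] dyadic_shift_eq[OF b] dyadic_shift_eq conj_shift_add)
qed

lemma dyadic_shift_eq_id_iff: "r \<in> dyadic \<Longrightarrow> dyadic_shift r = id \<longleftrightarrow> r = 0"
  by (auto simp: dyadic_iff dyadic_shift_eq conj_shift_eq_id_iff)

lemma dyadic_shift_inject:
  assumes "r \<in> dyadic" "s \<in> dyadic" "dyadic_shift r = dyadic_shift s"
  shows "r = s"
proof -
  have "dyadic_shift (r - s) = dyadic_shift (- s) \<circ> dyadic_shift r"
    using dyadic_shift_add[of "- s" r] assms by (simp add: dyadic_uminus)
  also have "\<dots> = id"
    using dyadic_shift_add[of "- s" s] assms by (simp add: dyadic_uminus)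
  finally have "dyadic_shift (r - s) = id" .
  moreover have "r - s \<in> dyadic"
    using dyadic_add[OF assms(1) dyadic_uminus[OF assms(2)]] by simp
  ultimately show ?thesis by (simp add: dyadic_shift_eq_id_iff)
qed

lemma fpow_comp_dyadic_shift:
  assumes "r \<in> dyadic"
  shows "fpow n \<circ> dyadic_shift r = dyadic_shift (2 powi n * r) \<circ> fpow n"
proof -
  obtain q c where c: "r * 2 powi q = of_int c" using assms by (auto simp: dyadic_iff)
  then have "(2 powi n * r) * 2 powi (q - n) = of_int c"
    by (simp add: power_int_diff field_simps)
  then show ?thesis by (simp add: dyadic_shift_eq[OF c] dyadic_shift_eq fpow_comp_conj_shift)
qed

lemma fpow_eq_dyadic_shift_imp_zero:
  assumes "r \<in> dyadic" "fpow n = dyadic_shift r"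
  shows "n = 0"
proof -
  have "dyadic_shift (2 powi n) \<circ> fpow n = fpow n \<circ> dyadic_shift 1"
    using fpow_comp_dyadic_shift[OF dyadic_1, of n] by simp
  also have "\<dots> = dyadic_shift 1 \<circ> fpow n"
    using dyadic_shift_add[OF assms(1) dyadic_1] dyadic_shift_add[OF dyadic_1 assms(1)]
    by (simp add: assms(2) add.commute)
  finally have "dyadic_shift (2 powi n) \<circ> (fpow n \<circ> fpow (- n)) = dyadic_shift 1 \<circ> (fpow n \<circ> fpow (- n))"
    by (simp add: o_assoc)
  then have "dyadic_shift (2 powi n) = dyadic_shift 1" by (simp add: fpow_cancel)
  then have "2 powi n = (2::real) powi 0"
    by (auto intro: dyadic_shift_inject dyadic_powi_mult[OF dyadic_1, simplified])
  then show ?thesis using power_int_inject_exp[of "2::real" n 0] by simp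
qed

definition theta :: "(real \<Rightarrow> real) \<Rightarrow> real \<Rightarrow> real" where
  "theta = (\<lambda>g \<in> GA_maps. dyadic_shift (g 0) \<circ> fpow (THE n. 2 powi n = g 1 - g 0))"

lemma theta_extensional: "theta \<in> extensional GA_maps"
  by (simp add: theta_def)

lemma theta_affine:
  assumes "r \<in> dyadic"
  shows "theta (\<lambda>x. 2 powi n * x + r) = dyadic_shift r \<circ> fpow n"
  using assms by (simp add: theta_def affine_in_GA_maps)

lemma theta_T1: "theta T1 = T1" and theta_D: "theta D = f"
  using theta_affine[OF dyadic_1, of 0] theta_affine[OF dyadic_0, of 1]
  by (simp_all add: dyadic_shift_1 fpow_1) (simp_all add: T1_def D_def)

lemma theta_hom: "theta \<in> hom GA_Q2 Homeo_plus"
proof (rule homI)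
  fix g assume "g \<in> carrier GA_Q2"
  then obtain n r where "r \<in> dyadic" "g = (\<lambda>x. 2 powi n * x + r)" by (auto simp: GA_maps_def)
  then show "theta g \<in> carrier Homeo_plus"
    using Homeo_plus.m_closed dyadic_shift_in_Homeo_plus fpow_in_Homeo_plus by (simp add: theta_affine)
next
  fix g h assume "g \<in> carrier GA_Q2" "h \<in> carrier GA_Q2"
  then obtain a b r s where r: "r \<in> dyadic" and s: "s \<in> dyadic"
    and gh: "g = (\<lambda>x. 2 powi a * x + r)" "h = (\<lambda>x. 2 powi b * x + s)"
    by (auto simp: GA_maps_def)
  have s': "2 powi a * s \<in> dyadic" using s by (rule dyadic_powi_mult)
  have "theta (g \<otimes>\<^bsub>GA_Q2\<^esub> h) = dyadic_shift (2 powi a * s + r) \<circ> fpow (a + b)"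
    using dyadic_add[OF s' r] by (simp add: gh affine_comp theta_affine)
  also have "\<dots> = dyadic_shift r \<circ> (dyadic_shift (2 powi a * s) \<circ> fpow a) \<circ> fpow b"
    by (simp add: add.commute[of _ r] dyadic_shift_add[OF r s'] fpow_add o_assoc)
  also have "\<dots> = theta g \<otimes>\<^bsub>Homeo_plus\<^esub> theta h"
    unfolding fpow_comp_dyadic_shift[OF s, symmetric] by (simp add: gh theta_affine r s o_assoc)
  finally show "theta (g \<otimes>\<^bsub>GA_Q2\<^esub> h) = theta g \<otimes>\<^bsub>Homeo_plus\<^esub> theta h" .
qed

lemma theta_kernel: "kernel GA_Q2 Homeo_plus theta = {id}"
proof -
  have "g = id" if "g \<in> GA_maps" "theta g = id" for g
  proof -
    obtain n r where r: "r \<in> dyadic" and g: "g = (\<lambda>x. 2 powi n * x + r)"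
      using \<open>g \<in> GA_maps\<close> by (auto simp: GA_maps_def)
    have id: "dyadic_shift r \<circ> fpow n = id"
      using \<open>theta g = id\<close> by (simp add: g theta_affine r)
    then have "dyadic_shift (- r) \<circ> (dyadic_shift r \<circ> fpow n) = dyadic_shift (- r)"
      by simp
    then have "fpow n = dyadic_shift (- r)"
      using dyadic_shift_add[OF dyadic_uminus[OF r] r] by (simp add: o_assoc)
    then have "n = 0" using dyadic_uminus[OF r] by (rule fpow_eq_dyadic_shift_imp_zero[rotated])
    then have "r = 0" using id r by (simp add: dyadic_shift_eq_id_iff)
    with \<open>n = 0\<close> show "g = id" by (auto simp: g)
  qed
  moreover have "theta id = id"
    using theta_affine[OF dyadic_0, of 0] by (simp flip: id_def)
  ultimately show ?thesis using GA_Q2.one_closed by (auto simp: kernel_def)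
qed

lemma theta_inj: "inj_on theta (carrier GA_Q2)"
proof -
  interpret group_hom GA_Q2 Homeo_plus theta
    by (simp add: group_hom_def group_hom_axioms_def theta_hom)
  show ?thesis using inj_iff_trivial_ker theta_kernel by simp
qed

end

theorem mainTheorem4:
  fixes f :: "real \<Rightarrow> real"
  assumes "f \<in> Homeo_plus_maps"
    and "\<And>x. f (x + 1) = f x + 2"
    and "f 0 = 0"
  shows "(\<exists>!\<theta>. \<theta> \<in> hom GA_Q2 Homeo_plus \<and> \<theta> \<in> extensional (carrier GA_Q2)
              \<and> \<theta> T1 = T1 \<and> \<theta> D = f)
       \<and> (\<forall>\<theta>. \<theta> \<in> hom GA_Q2 Homeo_plus \<and> \<theta> \<in> extensional (carrier GA_Q2)
              \<and> \<theta> T1 = T1 \<and> \<theta> D = f \<longrightarrow> inj_on \<theta> (carrier GA_Q2))"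
proof -
  interpret doubling_homeo f
    using assms(1,2) by unfold_locales
  define P where "P \<theta> \<longleftrightarrow> \<theta> \<in> hom GA_Q2 Homeo_plus \<and> \<theta> \<in> extensional (carrier GA_Q2)
    \<and> \<theta> T1 = T1 \<and> \<theta> D = f" for \<theta>
  have "P theta"
    by (simp add: P_def theta_hom theta_extensional theta_T1 theta_D)
  moreover have unique: "\<theta> = theta" if "P \<theta>" for \<theta>
  proof (rule extensionalityI)
    show "\<theta> g = theta g" if "g \<in> carrier GA_Q2" for g
      using \<open>P \<theta>\<close> hom_GA_Q2_eqI[OF _ theta_hom group_Homeo_plus _ _ that]
      by (simp add: P_def theta_T1 theta_D)
  qed (use that theta_extensional in \<open>simp_all add: P_def\<close>)
  ultimately have "\<exists>!\<theta>. P \<theta>" by (rule ex1I)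
  moreover have "\<forall>\<theta>. P \<theta> \<longrightarrow> inj_on \<theta> (carrier GA_Q2)"
    using unique theta_inj by blast
  ultimately show ?thesis unfolding P_def by (rule conjI)
qed

end
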